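(* Let $\mathcal{H}$ be a family of $h$ halfspaces in $\mathbb{R}^d$ and let $k$ be a positive integer. Suppose that for some positive integer $t$ there exists an integer $m$ with the following property: the $t$-tuples of every finite point set $S\subset\mathbb{R}^d$ can be $k$-colored such that every $\mathcal{H}$-region that contains at least $m$ points of $S$ contains a $t$-tuple of each of the $k$ colors. Then for every integer $t'>t$, with $m'=m+t'-t$, the $t'$-tuples of every finite point set $S\subset\mathbb{R}^d$ can be $k$-colored such that every $\mathcal{H}$-region that contains at least $m'$ points of $S$ contains a $t'$-tuple of each of the $k$ colors.
   Context: Given a finite family of halfspaces $\mathcal{H}=\{H_1,\dots,H_h\}$ in $\mathbb{R}^d$, a region $R$ is an $\mathcal{H}$-region if it is the intersection of finitely many halfspaces, each of which is a translate of one of the halfspaces in $\mathcal{H}$. A $t$-tuple of points of $S$ is an unordered $t$-element subset of $S$; a region contains it if it contains all its points. *)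

theory Defs
  imports "HOL-Analysis.Analysis"
begin

definition halfspace :: "('a::euclidean_space) set \<Rightarrow> bool" where
  "halfspace H \<longleftrightarrow> (\<exists>a b. a \<noteq> 0 \<and> H = {x. a \<bullet> x \<le> b})"

definition translate :: "'a::euclidean_space \<Rightarrow> 'a set \<Rightarrow> 'a set" where
  "translate v H = (\<lambda>x. v + x) ` H"

definition region :: "('a::euclidean_space) set set \<Rightarrow> 'a set \<Rightarrow> bool" where
  "region \<H> R \<longleftrightarrow> (\<exists>F. finite F \<and> (\<forall>G\<in>F. \<exists>H\<in>\<H>. \<exists>v. G = translate v H) \<and> R = \<Inter>F)"

text \<open>Colours are 0..k-1; a t-tuple of S is a t-element subset of S.\<close>
definition colorable :: "('a::euclidean_space) set set \<Rightarrow> nat \<Rightarrow> nat \<Rightarrow> int \<Rightarrow> bool" where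
  "colorable \<H> k t m \<longleftrightarrow>
     (\<forall>S. finite S \<longrightarrow>
        (\<exists>c :: 'a set \<Rightarrow> nat.
           (\<forall>T. T \<subseteq> S \<and> card T = t \<longrightarrow> c T < k) \<and>
           (\<forall>R. region \<H> R \<and> int (card (R \<inter> S)) \<ge> m \<longrightarrow>
              (\<forall>i<k. \<exists>T. T \<subseteq> R \<inter> S \<and> card T = t \<and> c T = i))))"

end

theory Submission
  imports Defs
begin

(* Fix a linear order on the finite set S and, for every q, a polychromatic colouring of
   the t-tuples of S - {q}. Colour a (t+1)-tuple T with the colour that the colouring of
   S - {max T} gives to T - {max T}. If a region contains at least m+1 points of S, let q be
   the largest of them: the region still contains m points of S - {q}, hence t-tuples T' of
   every colour there, and the (t+1)-tuple insert q T' has maximum q, so it inherits the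
   colour of T'. Iterating gives the theorem. *)

definition polychromatic_coloring ::
    "('a::euclidean_space) set set \<Rightarrow> nat \<Rightarrow> nat \<Rightarrow> int \<Rightarrow> 'a set \<Rightarrow> ('a set \<Rightarrow> nat) \<Rightarrow> bool" where
  "polychromatic_coloring \<H> k t m S c \<longleftrightarrow>
     (\<forall>T. T \<subseteq> S \<and> card T = t \<longrightarrow> c T < k) \<and>
     (\<forall>R. region \<H> R \<and> int (card (R \<inter> S)) \<ge> m \<longrightarrow>
        (\<forall>i<k. \<exists>T. T \<subseteq> R \<inter> S \<and> card T = t \<and> c T = i))"

lemma colorable_iff_polychromatic_coloring:
  "colorable \<H> k t m \<longleftrightarrow> (\<forall>S. finite S \<longrightarrow> (\<exists>c. polychromatic_coloring \<H> k t m S c))"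
  unfolding colorable_def polychromatic_coloring_def ..

lemma region_UNIV: "region \<H> UNIV"
  unfolding region_def by (rule exI[of _ "{}"]) simp

lemma colorable_imp_pos:
  assumes "colorable \<H> k t m" and "k > 0" and "t > 0"
  shows "m > 0"
proof (rule ccontr)
  assume "\<not> m > 0"
  obtain c where "polychromatic_coloring \<H> k t m {} c"
    using assms(1) unfolding colorable_iff_polychromatic_coloring by blast
  with \<open>\<not> m > 0\<close> \<open>k > 0\<close> obtain T :: "'a set" where "T \<subseteq> {}" "card T = t"
    unfolding polychromatic_coloring_def using region_UNIV by fastforce
  with \<open>t > 0\<close> show False by simp
qed

lemma finite_obtain_max_selector:
  assumes "finite S"
  obtains greatest :: "'a set \<Rightarrow> 'a"
  where "\<And>T. T \<subseteq> S \<Longrightarrow> T \<noteq> {} \<Longrightarrow> greatest T \<in> T"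
    and "\<And>T U. U \<subseteq> S \<Longrightarrow> T \<subseteq> U \<Longrightarrow> greatest U \<in> T \<Longrightarrow> greatest T = greatest U"
proof -
  obtain f :: "'a \<Rightarrow> nat" where f: "inj_on f S"
    using assms finite_imp_inj_to_nat_seg by blast
  define greatest where "greatest T = inv_into S f (Max (f ` T))" for T
  have max_in: "Max (f ` T) \<in> f ` T" and greatest_in: "greatest T \<in> T"
    if "T \<subseteq> S" "T \<noteq> {}" for T
  proof -
    have "finite T" using that assms finite_subset by blast
    with that show max_in: "Max (f ` T) \<in> f ` T" by simp
    then obtain x where "x \<in> T" "Max (f ` T) = f x" by blast
    with that f show "greatest T \<in> T" unfolding greatest_def by (simp add: subset_iff)
  qed
  have greatest_mono: "greatest T = greatest U"
    if "U \<subseteq> S" "T \<subseteq> U" "greatest U \<in> T" for T U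
  proof -
    have "finite U" using that assms finite_subset by blast
    have "U \<noteq> {}" using that by blast
    have "Max (f ` U) \<in> f ` S" using max_in[OF \<open>U \<subseteq> S\<close> \<open>U \<noteq> {}\<close>] that by blast
    then have "f (greatest U) = Max (f ` U)" unfolding greatest_def by (rule f_inv_into_f)
    have "finite (f ` T)" "f (greatest U) \<in> f ` T"
      using that \<open>finite U\<close> finite_subset by blast+
    then have "Max (f ` U) \<le> Max (f ` T)"
      using \<open>f (greatest U) = Max (f ` U)\<close> Max_ge by metis
    moreover have "Max (f ` T) \<le> Max (f ` U)"
      using that \<open>finite U\<close> by (intro Max_mono) auto
    ultimately have "Max (f ` T) = Max (f ` U)" by simp
    thus ?thesis unfolding greatest_def by simp
  qed
  show thesis using greatest_in greatest_mono by (rule that)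
qed

lemma polychromatic_coloring_extend_by_max:
  assumes C: "\<And>q. polychromatic_coloring \<H> k t m (S - {q}) (C q)"
    and greatest_in: "\<And>T. T \<subseteq> S \<Longrightarrow> T \<noteq> {} \<Longrightarrow> greatest T \<in> T"
    and greatest_mono:
      "\<And>T U. U \<subseteq> S \<Longrightarrow> T \<subseteq> U \<Longrightarrow> greatest U \<in> T \<Longrightarrow> greatest T = greatest U"
    and "finite S" and "m \<ge> 0"
  shows "polychromatic_coloring \<H> k (Suc t) (m + 1) S (\<lambda>T. C (greatest T) (T - {greatest T}))"
  unfolding polychromatic_coloring_def
proof (intro conjI allI impI)
  fix T assume T: "T \<subseteq> S \<and> card T = Suc t"
  then have "finite T" using \<open>finite S\<close> finite_subset by blast
  have "greatest T \<in> T" using T greatest_in[of T] by force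
  with T \<open>finite T\<close>
  have "T - {greatest T} \<subseteq> S - {greatest T}" "card (T - {greatest T}) = t" by auto
  then show "C (greatest T) (T - {greatest T}) < k"
    using C[of "greatest T"] unfolding polychromatic_coloring_def by blast
next
  fix R i assume R: "region \<H> R \<and> int (card (R \<inter> S)) \<ge> m + 1" and "i < k"
  define q where "q = greatest (R \<inter> S)"
  have "R \<inter> S \<noteq> {}"
  proof
    assume "R \<inter> S = {}"
    with R \<open>m \<ge> 0\<close> show False by simp
  qed
  then have q: "q \<in> R \<inter> S" using greatest_in q_def by blast
  have "R \<inter> (S - {q}) = (R \<inter> S) - {q}" by blast
  then have "card (R \<inter> (S - {q})) = card (R \<inter> S) - 1"
    using q \<open>finite S\<close> by simp
  with R have "int (card (R \<inter> (S - {q}))) \<ge> m" by linarith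
  then obtain T' where T': "T' \<subseteq> R \<inter> (S - {q})" "card T' = t" "C q T' = i"
    using C[of q] R \<open>i < k\<close> unfolding polychromatic_coloring_def by blast
  have "finite T'" using T' \<open>finite S\<close> finite_subset by blast
  have "q \<notin> T'" using T' by blast
  have TRS: "insert q T' \<subseteq> R \<inter> S" using T' q by blast
  then have "greatest (insert q T') = q"
    using greatest_mono[of "R \<inter> S" "insert q T'"] q_def by blast
  then have "C (greatest (insert q T')) (insert q T' - {greatest (insert q T')}) = i"
    using \<open>q \<notin> T'\<close> T' by simp
  moreover have "card (insert q T') = Suc t" using \<open>finite T'\<close> \<open>q \<notin> T'\<close> T' by simp
  ultimately show "\<exists>T. T \<subseteq> R \<inter> S \<and> card T = Suc t \<and> C (greatest T) (T - {greatest T}) = i"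
    using TRS by (intro exI[of _ "insert q T'"] conjI)
qed

lemma colorable_Suc:
  assumes "colorable \<H> k t m" and "k > 0" and "t > 0"
  shows "colorable \<H> k (Suc t) (m + 1)"
  unfolding colorable_iff_polychromatic_coloring
proof (intro allI impI)
  fix S :: "'a set" assume "finite S"
  have "\<forall>q. \<exists>c. polychromatic_coloring \<H> k t m (S - {q}) c"
    using assms(1) \<open>finite S\<close> unfolding colorable_iff_polychromatic_coloring by blast
  then obtain C where C: "\<And>q. polychromatic_coloring \<H> k t m (S - {q}) (C q)"
    by metis
  have "m \<ge> 0" using colorable_imp_pos[OF assms] by simp
  show "\<exists>c. polychromatic_coloring \<H> k (Suc t) (m + 1) S c"
  proof (rule finite_obtain_max_selector[OF \<open>finite S\<close>])
    fix greatest :: "'a set \<Rightarrow> 'a"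
    assume "\<And>T. T \<subseteq> S \<Longrightarrow> T \<noteq> {} \<Longrightarrow> greatest T \<in> T"
      and "\<And>T U. U \<subseteq> S \<Longrightarrow> T \<subseteq> U \<Longrightarrow> greatest U \<in> T \<Longrightarrow> greatest T = greatest U"
    with C \<open>finite S\<close> \<open>m \<ge> 0\<close>
    have "polychromatic_coloring \<H> k (Suc t) (m + 1) S (\<lambda>T. C (greatest T) (T - {greatest T}))"
      by (intro polychromatic_coloring_extend_by_max)
    then show ?thesis by auto
  qed
qed

lemma colorable_add:
  assumes "colorable \<H> k t m" and "k > 0" and "t > 0"
  shows "colorable \<H> k (t + j) (m + int j)"
proof (induction j)
  case 0
  show ?case using assms(1) by simp
next
  case (Suc j)
  from colorable_Suc[OF Suc \<open>k > 0\<close>] \<open>t > 0\<close> show ?case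
    by (simp add: algebra_simps)
qed

theorem theorem7:
  fixes \<H> :: "(real ^ 'n) set set" and k t t' :: nat and m :: int
  assumes "finite \<H>" and "\<forall>H\<in>\<H>. halfspace H"
    and "k > 0" and "t > 0"
    and "colorable \<H> k t m"
    and "t' > t"
  shows "colorable \<H> k t' (m + int t' - int t)"
  using colorable_add[OF assms(5,3,4), of "t' - t"] \<open>t' > t\<close>
  by (simp add: of_nat_diff algebra_simps)

end
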